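(* Let $\mathbf{H}\in\mathbb{R}^{m\times n}$ have full column rank, with rows indexed by sensors $\{1,\dots,m\}$ and columns by state variables $\{1,\dots,n\}$. Let $\mathcal{S}_o\subseteq\{1,\dots,m\}$, let $\mathbf{H}_o\in\mathbb{R}^{|\mathcal{S}_o|\times n}$ be the submatrix of $\mathbf{H}$ consisting of the rows indexed by $\mathcal{S}_o$, and let $\mathcal{X}_o$ be the set of indices of the nonzero columns of $\mathbf{H}_o$. Suppose that (i) the state variables in $\mathcal{X}_o$ are observable with respect to $\mathcal{S}_o$; (ii) $\mathcal{C}\subseteq\mathcal{S}_o$ is a critical set with respect to $(\mathcal{S}_o,\mathcal{X}_o)$; (iii) the submatrix of $\mathbf{H}$ obtained by removing the rows indexed by $\mathcal{C}$ does not have full column rank. Let $\mathcal{A}_o$ be the set of vectors $\mathbf{b}\in\mathcal{R}(\mathbf{H}_o)$ whose entries corresponding to the sensors in $\mathcal{S}_o\setminus\mathcal{C}$ are all zero. Then: (1) $\mathcal{A}_o$ is a linear subspace of dimension one; (2) for any nonzero $\mathbf{a}_o\in\mathcal{A}_o$, the vector $\mathbf{a}\in\mathbb{R}^m$ defined by $a_i=(\mathbf{a}_o)_i$ (the entry of $\mathbf{a}_o$ corresponding to sensor $i$) for $i\in\mathcal{C}$ and $a_i=0$ for $i\notin\mathcal{C}$ is an unobservable attack, i.e., $\mathbf{a}\neq\mathbf{0}$ and $\mathbf{a}\in\mathcal{R}(\mathbf{H})$.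
   Context: Linearized model $\mathbf{z}=\mathbf{H}\mathbf{x}+\mathbf{e}$. For a sensor set $\mathcal{S}$ and a set of state variables $\mathcal{X}$, let $\mathbf{H}_{\mathcal{S}}$ be the submatrix of $\mathbf{H}$ keeping only rows in $\mathcal{S}$; the variables in $\mathcal{X}$ are observable with respect to $\mathcal{S}$ if every vector in $\mathcal{N}(\mathbf{H}_{\mathcal{S}})$ has zero entries at all coordinates in $\mathcal{X}$. If the variables in $\mathcal{X}$ are observable with respect to $\mathcal{S}$, a subset $\mathcal{C}\subseteq\mathcal{S}$ is a critical set with respect to $(\mathcal{S},\mathcal{X})$ if the variables in $\mathcal{X}$ are not observable with respect to $\mathcal{S}\setminus\mathcal{C}$, while they remain observable with respect to $\mathcal{S}\setminus\mathcal{C}'$ for every strict subset $\mathcal{C}'\subsetneq\mathcal{C}$. An attack adding $\mathbf{a}$ to the data is unobservable iff $\mathbf{a}\ne\mathbf{0}$ and $\mathbf{a}\in\mathcal{R}(\mathbf{H})$ (then $\mathbf{z}+\mathbf{a}=\mathbf{H}\bar{\mathbf{x}}+\mathbf{e}$ for some $\bar{\mathbf{x}}\neq\mathbf{x}$). *)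

theory Defs
  imports "HOL-Analysis.Analysis"
begin

text \<open>Sensors are indexed by the finite type 'm, state variables by the finite type 'n.
  The row-submatrix H_S is represented by the m x n matrix whose rows outside S are zeroed
  (same null space, same rank); vectors in R^S are represented as vectors in R^m that vanish
  outside S (canonical zero-padding embedding).\<close>

definition keep_rows :: "'m set \<Rightarrow> real^'n^'m \<Rightarrow> real^'n^'m" where
  "keep_rows S H = (\<chi> i. if i \<in> S then H $ i else 0)"

definition full_column_rank :: "real^'n^'m \<Rightarrow> bool" where
  "full_column_rank H \<longleftrightarrow> rank H = CARD('n)"

definition null_rows :: "real^'n^'m \<Rightarrow> 'm set \<Rightarrow> (real^'n) set" where
  "null_rows H S = {x. \<forall>i\<in>S. (H *v x) $ i = 0}"

definition observable :: "real^'n^'m \<Rightarrow> 'm set \<Rightarrow> 'n set \<Rightarrow> bool" where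
  "observable H S X \<longleftrightarrow> (\<forall>x\<in>null_rows H S. \<forall>j\<in>X. x $ j = 0)"

definition critical_set :: "real^'n^'m \<Rightarrow> 'm set \<Rightarrow> 'n set \<Rightarrow> 'm set \<Rightarrow> bool" where
  "critical_set H S X C \<longleftrightarrow>
     observable H S X \<and> C \<subseteq> S \<and> \<not> observable H (S - C) X \<and>
     (\<forall>C'. C' \<subset> C \<longrightarrow> observable H (S - C') X)"

definition unobservable_attack :: "real^'n^'m \<Rightarrow> real^'m \<Rightarrow> bool" where
  "unobservable_attack H a \<longleftrightarrow> a \<noteq> 0 \<and> a \<in> range (\<lambda>x. H *v x)"

end

theory Submission
  imports Defs
begin

text \<open>A vector z \<noteq> 0 with H z vanishing outside C exists because H without the rows C is
  rank deficient, and v = H z \<noteq> 0 because H has full column rank; v lies in A_o. For c \<in> C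
  with v_c \<noteq> 0 and any b = H_o x in A_o, the vector y = v_c x - (H x)_c z is annihilated by the
  rows S_o - (C - {c}); minimality of C makes these rows observe X_o, so y vanishes on X_o and
  hence H_o y = v_c b - (H x)_c v = 0. Thus A_o is the line through v, and each of its elements
  is already supported on C and equal to H (t z).\<close>

lemma keep_rows_mult_vec [simp]:
  "(keep_rows S H *v x) $ i = (if i \<in> S then (H *v x) $ i else 0)"
  by (simp add: keep_rows_def matrix_vector_mult_def)

lemma keep_rows_mult_vec_eq_0:
  assumes "\<forall>j\<in>{j. \<exists>i\<in>S. H $ i $ j \<noteq> 0}. y $ j = 0"
  shows "keep_rows S H *v y = 0"
proof -
  have "(H *v y) $ i = 0" if "i \<in> S" for i
    unfolding matrix_vector_mult_def using that assms by (force intro!: sum.neutral)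
  then show ?thesis by (simp add: vec_eq_iff)
qed

lemma critical_set_observable_remove_one:
  assumes "critical_set H S X C" and "c \<in> C"
  shows "observable H (S - (C - {c})) X"
  using assms unfolding critical_set_def by blast

definition attack_space :: "real^'n^'m \<Rightarrow> 'm set \<Rightarrow> 'm set \<Rightarrow> (real^'m) set" where
  "attack_space H S C = {b \<in> range (\<lambda>x. keep_rows S H *v x). \<forall>i\<in>S - C. b $ i = 0}"

lemma subspace_attack_space:
  fixes H :: "real^'n^'m"
  shows "subspace (attack_space H S C)"
proof -
  have "attack_space H S C = range ((*v) (keep_rows S H)) \<inter> {b. \<forall>i\<in>S - C. b $ i = 0}"
    by (auto simp: attack_space_def)
  moreover have "subspace (range ((*v) (keep_rows S H)))"
    by (intro linear_subspace_image subspace_UNIV matrix_vector_mul_linear)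
  moreover have "subspace {b :: real^'m. \<forall>i\<in>S - C. b $ i = 0}"
    by (auto simp: subspace_def)
  ultimately show ?thesis by (simp add: subspace_inter)
qed

lemma attack_space_vanishes_outside:
  assumes "b \<in> attack_space H S C" and "i \<notin> C"
  shows "b $ i = 0"
  using assms by (auto simp: attack_space_def)

lemma attack_space_multiple:
  fixes H :: "real^'n^'m"
  assumes obs: "observable H (S - (C - {c})) {j. \<exists>i\<in>S. H $ i $ j \<noteq> 0}"
    and "C \<subseteq> S" and "c \<in> C"
    and z_outside: "\<And>i. i \<notin> C \<Longrightarrow> (H *v z) $ i = 0"
    and z_at: "(H *v z) $ c \<noteq> 0"
    and b: "b \<in> attack_space H S C"
  shows "\<exists>t. b = t *\<^sub>R (H *v z)"
proof -
  define v where "v = H *v z"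
  obtain x where x: "b = keep_rows S H *v x" and b_SC: "\<forall>i\<in>S - C. b $ i = 0"
    using b unfolding attack_space_def by blast
  have x_SC: "(H *v x) $ i = 0" if "i \<in> S" "i \<notin> C" for i
    using b_SC that unfolding x by simp
  have Kz: "keep_rows S H *v z = v"
    using \<open>C \<subseteq> S\<close> z_outside by (auto simp: vec_eq_iff v_def)
  define y where "y = v $ c *\<^sub>R x - (H *v x) $ c *\<^sub>R z"
  have Hy: "H *v y = v $ c *\<^sub>R (H *v x) - (H *v x) $ c *\<^sub>R v"
    by (simp add: y_def v_def algebra_simps)
  have "y \<in> null_rows H (S - (C - {c}))"
    using x_SC z_outside \<open>c \<in> C\<close> by (force simp: null_rows_def Hy v_def)
  then have "keep_rows S H *v y = 0"
    using obs unfolding observable_def by (intro keep_rows_mult_vec_eq_0) blast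
  moreover have "keep_rows S H *v y = v $ c *\<^sub>R b - (H *v x) $ c *\<^sub>R v"
    by (simp add: y_def x Kz[symmetric] algebra_simps)
  ultimately have "v $ c *\<^sub>R b = (H *v x) $ c *\<^sub>R v" by simp
  then have "b = ((H *v x) $ c / v $ c) *\<^sub>R v"
    using z_at unfolding v_def by (metis divide_inverse_commute scaleR_scaleR right_inverse
        scaleR_one mult.commute)
  then show ?thesis unfolding v_def by blast
qed

theorem theorem3:
  fixes H :: "real^'n^'m" and So C :: "'m set"
  assumes "full_column_rank H"
    and "observable H So {j. \<exists>i\<in>So. H $ i $ j \<noteq> 0}"
    and "critical_set H So {j. \<exists>i\<in>So. H $ i $ j \<noteq> 0} C"
    and "\<not> full_column_rank (keep_rows (- C) H)"
  shows "let Ao = {b \<in> range (\<lambda>x. keep_rows So H *v x). \<forall>i\<in>So - C. b $ i = 0}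
         in subspace Ao \<and> dim Ao = 1 \<and>
            (\<forall>ao\<in>Ao. ao \<noteq> 0 \<longrightarrow>
               unobservable_attack H (\<chi> i. if i \<in> C then ao $ i else 0))"
proof -
  have "C \<subseteq> So" using assms(3) unfolding critical_set_def by blast
  obtain z where "z \<noteq> 0" and "keep_rows (- C) H *v z = 0"
    using assms(4) matrix_nonfull_linear_equations_eq unfolding full_column_rank_def by blast
  then have z_outside: "(H *v z) $ i = 0" if "i \<notin> C" for i
    using that by (metis keep_rows_mult_vec ComplI zero_index)
  have "H *v z \<noteq> 0"
    using assms(1) \<open>z \<noteq> 0\<close> matrix_nonfull_linear_equations_eq full_column_rank_def by blast
  then obtain c where z_at: "(H *v z) $ c \<noteq> 0" by (metis vec_eq_iff zero_index)
  with z_outside have "c \<in> C" by blast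
  have multiple: "\<exists>t. b = t *\<^sub>R (H *v z)" if "b \<in> attack_space H So C" for b
    using attack_space_multiple critical_set_observable_remove_one[OF assms(3) \<open>c \<in> C\<close>]
      \<open>C \<subseteq> So\<close> \<open>c \<in> C\<close> z_outside z_at that by blast
  have "keep_rows So H *v z = H *v z"
    using \<open>C \<subseteq> So\<close> z_outside by (auto simp: vec_eq_iff)
  then have "H *v z \<in> attack_space H So C"
    using z_outside by (auto simp: attack_space_def intro!: image_eqI[where x=z])
  then have "attack_space H So C = span {H *v z}"
    using multiple subspace_attack_space span_minimal[of "{H *v z}" "attack_space H So C"]
    by (auto simp: span_singleton) (metis rangeI)
  moreover have "unobservable_attack H (\<chi> i. if i \<in> C then ao $ i else 0)"
    if ao: "ao \<in> attack_space H So C" "ao \<noteq> 0" for ao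
  proof -
    have "(\<chi> i. if i \<in> C then ao $ i else 0) = ao"
      using attack_space_vanishes_outside[OF ao(1)] by (auto simp: vec_eq_iff)
    moreover obtain t where "ao = H *v (t *\<^sub>R z)"
      using multiple[OF ao(1)] by (auto simp: matrix_vector_mult_scaleR)
    ultimately show ?thesis using ao(2) unfolding unobservable_attack_def by auto
  qed
  ultimately show ?thesis
    using subspace_attack_space \<open>H *v z \<noteq> 0\<close>
    unfolding Let_def attack_space_def[symmetric] by simp
qed

end
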